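(* Let $(A(n))_{n\ge1}$ be an i.i.d. sequence of random topical operators on $\mathbb R^d$, and let $a,b\in\mathbb R$. Suppose there is $\theta_1\in Top_d$ of rank 1 such that for every $A\in S_A$ and every $\theta'\in T_A$ of rank 1, $$(\theta_1A\theta'-\theta_1\theta')(\mathbb R^d)\subset(a+b\mathbb Z)\mathbf 1.$$ Then every $\theta\in T_A$ of rank 1 satisfies $(\theta A\theta'-\theta\theta')(\mathbb R^d)\subset(a+b\mathbb Z)\mathbf 1$ for every $A\in S_A$ and every $\theta'\in T_A$ of rank 1.
   Context: A map $A:\mathbb R^d\to\mathbb R^d$ is topical if it is isotone ($x\le y$ coordinatewise implies $Ax\le Ay$) and additively homogeneous ($A(x+a\mathbf 1)=Ax+a\mathbf 1$, $\mathbf 1=(1,\dots,1)'$). $Top_d$ is the set of topical operators with the topology of uniform convergence on compact sets. For $x\in\mathbb R^d$, $\bar x$ is its class modulo $\mathbb R\mathbf 1$. $A$ has rank 1 if $\overline{Ax}$ does not depend on $x$. $S_A$ is the support of the law of $A(1)$ in $Top_d$ and $T_A$ the semigroup generated by $S_A$ under composition. *)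

theory Defs
  imports "HOL-Probability.Probability"
begin

definition one_vec :: "real ^ 'd" where
  "one_vec = (\<chi> i. 1)"

definition topical :: "(real ^ 'd \<Rightarrow> real ^ 'd) \<Rightarrow> bool" where
  "topical F \<longleftrightarrow>
     (\<forall>x y. (\<forall>i. x $ i \<le> y $ i) \<longrightarrow> (\<forall>i. F x $ i \<le> F y $ i)) \<and>
     (\<forall>x a. F (x + a *\<^sub>R one_vec) = F x + a *\<^sub>R one_vec)"

text \<open>Rank 1: the class of F x modulo the line spanned by one_vec does not depend on x.\<close>
definition rank1 :: "(real ^ 'd \<Rightarrow> real ^ 'd) \<Rightarrow> bool" where
  "rank1 F \<longleftrightarrow> (\<forall>x y. \<exists>t::real. F x - F y = t *\<^sub>R one_vec)"

text \<open>Measurable space on maps R^d -> R^d (product sigma-algebra); on topical maps it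
  coincides with the Borel sigma-algebra of uniform convergence on compacts.\<close>
definition op_space :: "(real ^ 'd \<Rightarrow> real ^ 'd) measure" where
  "op_space = Pi\<^sub>M UNIV (\<lambda>_. borel)"

definition op_support :: "'w measure \<Rightarrow> ('w \<Rightarrow> real ^ 'd \<Rightarrow> real ^ 'd)
    \<Rightarrow> (real ^ 'd \<Rightarrow> real ^ 'd) set" where
  "op_support M X = {F. topical F \<and>
     (\<forall>K e. compact K \<and> e > 0 \<longrightarrow>
        measure M {\<omega> \<in> space M. \<forall>x\<in>K. dist (X \<omega> x) (F x) < e} > 0)}"

inductive_set gen_semigroup :: "('a \<Rightarrow> 'a) set \<Rightarrow> ('a \<Rightarrow> 'a) set" for S where
  base: "F \<in> S \<Longrightarrow> F \<in> gen_semigroup S"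
| comp: "F \<in> gen_semigroup S \<Longrightarrow> G \<in> gen_semigroup S \<Longrightarrow> F \<circ> G \<in> gen_semigroup S"

definition lattice_line :: "real \<Rightarrow> real \<Rightarrow> (real ^ 'd) set" where
  "lattice_line a b = {(a + b * of_int k) *\<^sub>R one_vec | k. True}"

end

theory Submission
  imports Defs
begin

text \<open>Call \<open>\<theta>\<^sub>1 G \<theta>' x - \<theta>\<^sub>1 \<theta>' x\<close> the shift of \<open>G\<close> at \<open>\<theta>'\<close>. By induction on words in the
  semigroup, the shifts of each \<open>G \<in> T\<^sub>A\<close> at rank-1 elements of \<open>T\<^sub>A\<close> lie in one coset \<open>(n a + b\<int>)\<one>\<close>
  with \<open>n\<close> depending only on \<open>G\<close>: the shift of \<open>F G\<close> at \<open>\<theta>'\<close> is the shift of \<open>F\<close> at the rank-1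
  operator \<open>G \<theta>'\<close> plus the shift of \<open>G\<close> at \<open>\<theta>'\<close>. If \<open>\<theta> \<in> T\<^sub>A\<close> has rank 1, then
  \<open>\<theta> A \<theta>' x - \<theta> \<theta>' x\<close> is a multiple of \<open>\<one>\<close>, hence unchanged by applying the additively homogeneous
  \<open>\<theta>\<^sub>1\<close>; it thus equals the shift of \<open>\<theta>\<close> at \<open>A \<theta>'\<close> minus the shift of \<open>\<theta>\<close> at \<open>\<theta>'\<close> plus the shift
  of \<open>A\<close> at \<open>\<theta>'\<close>, where the two contributions \<open>n a\<close> cancel.\<close>

definition add_homogeneous :: "(real ^ 'd \<Rightarrow> real ^ 'd) \<Rightarrow> bool" where
  "add_homogeneous F \<longleftrightarrow> (\<forall>x a. F (x + a *\<^sub>R one_vec) = F x + a *\<^sub>R one_vec)"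

lemma topical_imp_add_homogeneous: "topical F \<Longrightarrow> add_homogeneous F"
  unfolding topical_def add_homogeneous_def by blast

lemma add_homogeneous_comp:
  "add_homogeneous F \<Longrightarrow> add_homogeneous G \<Longrightarrow> add_homogeneous (F \<circ> G)"
  unfolding add_homogeneous_def by simp

lemma gen_semigroup_add_homogeneous:
  assumes "G \<in> gen_semigroup S" and "\<And>F. F \<in> S \<Longrightarrow> add_homogeneous F"
  shows "add_homogeneous G"
  using assms(1)
proof induction
  case (comp F G)
  then show ?case using add_homogeneous_comp by blast
qed (rule assms(2))

lemma add_homogeneous_diff_on_line:
  assumes "add_homogeneous G" and "x - y = t *\<^sub>R one_vec"
  shows "G x - G y = x - y"
proof -
  have "x = y + t *\<^sub>R one_vec" using assms(2) by (simp add: algebra_simps)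
  then show ?thesis using assms unfolding add_homogeneous_def by simp
qed

lemma rank1_comp:
  assumes "add_homogeneous G" and "rank1 T"
  shows "rank1 (G \<circ> T)"
  unfolding rank1_def
proof (intro allI)
  fix x y
  obtain t where t: "T x - T y = t *\<^sub>R one_vec" using assms(2) unfolding rank1_def by blast
  then have "G (T x) - G (T y) = t *\<^sub>R one_vec"
    using add_homogeneous_diff_on_line[OF assms(1)] by simp
  then show "\<exists>t. (G \<circ> T) x - (G \<circ> T) y = t *\<^sub>R one_vec" by auto
qed

lemma lattice_line_add:
  assumes "u \<in> lattice_line c b" and "v \<in> lattice_line c' b"
  shows "u + v \<in> lattice_line (c + c') b"
proof -
  obtain k k' where "u = (c + b * of_int k) *\<^sub>R one_vec" "v = (c' + b * of_int k') *\<^sub>R one_vec"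
    using assms unfolding lattice_line_def by blast
  then have "u + v = ((c + c') + b * of_int (k + k')) *\<^sub>R one_vec"
    by (simp add: algebra_simps)
  then show ?thesis unfolding lattice_line_def by blast
qed

lemma lattice_line_diff:
  assumes "u \<in> lattice_line c b" and "v \<in> lattice_line c' b"
  shows "u - v \<in> lattice_line (c - c') b"
proof -
  obtain k k' where "u = (c + b * of_int k) *\<^sub>R one_vec" "v = (c' + b * of_int k') *\<^sub>R one_vec"
    using assms unfolding lattice_line_def by blast
  then have "u - v = ((c - c') + b * of_int (k - k')) *\<^sub>R one_vec"
    by (simp add: algebra_simps)
  then show ?thesis unfolding lattice_line_def by blast
qed

context
  fixes S :: "(real ^ 'd \<Rightarrow> real ^ 'd) set" and \<theta>1 :: "real ^ 'd \<Rightarrow> real ^ 'd" and a b :: real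
  assumes homogeneous_S: "\<And>F. F \<in> S \<Longrightarrow> add_homogeneous F"
    and increment_S: "\<And>F \<theta>'. F \<in> S \<Longrightarrow> \<theta>' \<in> gen_semigroup S \<Longrightarrow> rank1 \<theta>'
           \<Longrightarrow> \<forall>x. \<theta>1 (F (\<theta>' x)) - \<theta>1 (\<theta>' x) \<in> lattice_line a b"
begin

lemma gen_semigroup_increment_coset:
  assumes "G \<in> gen_semigroup S"
  shows "\<exists>n::int. \<forall>T \<in> gen_semigroup S. rank1 T \<longrightarrow>
           (\<forall>x. \<theta>1 (G (T x)) - \<theta>1 (T x) \<in> lattice_line (of_int n * a) b)"
  using assms
proof induction
  case (base F)
  show ?case by (rule exI[of _ 1]) (simp add: increment_S base)
next
  case (comp F G)
  obtain n1 where n1: "\<forall>T \<in> gen_semigroup S. rank1 T \<longrightarrow>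
      (\<forall>x. \<theta>1 (F (T x)) - \<theta>1 (T x) \<in> lattice_line (of_int n1 * a) b)"
    using comp.IH(1) by blast
  obtain n2 where n2: "\<forall>T \<in> gen_semigroup S. rank1 T \<longrightarrow>
      (\<forall>x. \<theta>1 (G (T x)) - \<theta>1 (T x) \<in> lattice_line (of_int n2 * a) b)"
    using comp.IH(2) by blast
  have "\<theta>1 ((F \<circ> G) (T x)) - \<theta>1 (T x) \<in> lattice_line (of_int (n1 + n2) * a) b"
    if T: "T \<in> gen_semigroup S" "rank1 T" for T x
  proof -
    have "G \<circ> T \<in> gen_semigroup S" using comp.hyps(2) T(1) by (rule gen_semigroup.comp)
    moreover have "rank1 (G \<circ> T)"
      using rank1_comp[OF gen_semigroup_add_homogeneous[OF comp.hyps(2) homogeneous_S] T(2)] .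
    ultimately have "\<theta>1 (F (G (T x))) - \<theta>1 (G (T x)) \<in> lattice_line (of_int n1 * a) b"
      using n1 by auto
    moreover have "\<theta>1 (G (T x)) - \<theta>1 (T x) \<in> lattice_line (of_int n2 * a) b"
      using n2 T by blast
    ultimately show ?thesis
      using lattice_line_add by (fastforce simp: distrib_right)
  qed
  then show ?case by blast
qed

lemma rank1_increment_lattice_line:
  assumes "add_homogeneous \<theta>1"
    and "\<theta> \<in> gen_semigroup S" "rank1 \<theta>"
    and "F \<in> S" and "\<theta>' \<in> gen_semigroup S" "rank1 \<theta>'"
  shows "\<theta> (F (\<theta>' x)) - \<theta> (\<theta>' x) \<in> lattice_line a b"
proof -
  obtain n :: int where n: "\<forall>T \<in> gen_semigroup S. rank1 T \<longrightarrow>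
      (\<forall>x. \<theta>1 (\<theta> (T x)) - \<theta>1 (T x) \<in> lattice_line (of_int n * a) b)"
    using gen_semigroup_increment_coset[OF assms(2)] by blast
  have "F \<circ> \<theta>' \<in> gen_semigroup S"
    using gen_semigroup.base[OF assms(4)] assms(5) by (rule gen_semigroup.comp)
  moreover have "rank1 (F \<circ> \<theta>')"
    using rank1_comp[OF homogeneous_S[OF assms(4)] assms(6)] .
  ultimately have shift_at_F: "\<theta>1 (\<theta> (F (\<theta>' x))) - \<theta>1 (F (\<theta>' x)) \<in> lattice_line (of_int n * a) b"
    using n by auto
  have shift_at_id: "\<theta>1 (\<theta> (\<theta>' x)) - \<theta>1 (\<theta>' x) \<in> lattice_line (of_int n * a) b"
    using n assms(5,6) by blast
  have shift_of_F: "\<theta>1 (F (\<theta>' x)) - \<theta>1 (\<theta>' x) \<in> lattice_line a b"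
    using increment_S assms(4-6) by blast
  obtain t where "\<theta> (F (\<theta>' x)) - \<theta> (\<theta>' x) = t *\<^sub>R one_vec"
    using assms(3) unfolding rank1_def by blast
  then have "\<theta> (F (\<theta>' x)) - \<theta> (\<theta>' x) = \<theta>1 (\<theta> (F (\<theta>' x))) - \<theta>1 (\<theta> (\<theta>' x))"
    using add_homogeneous_diff_on_line[OF assms(1)] by metis
  also have "\<dots> = (\<theta>1 (\<theta> (F (\<theta>' x))) - \<theta>1 (F (\<theta>' x))) - (\<theta>1 (\<theta> (\<theta>' x)) - \<theta>1 (\<theta>' x))
                  + (\<theta>1 (F (\<theta>' x)) - \<theta>1 (\<theta>' x))"
    by simp
  also have "\<dots> \<in> lattice_line (of_int n * a - of_int n * a + a) b"
    by (intro lattice_line_add lattice_line_diff shift_at_F shift_at_id shift_of_F)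
  finally show ?thesis by simp
qed

end

theorem lemma3p2:
  fixes M :: "'w measure"
    and A :: "nat \<Rightarrow> 'w \<Rightarrow> real ^ 'd \<Rightarrow> real ^ 'd"
    and a b :: real
    and \<theta>1 :: "real ^ 'd \<Rightarrow> real ^ 'd"
  assumes "prob_space M"
    and "\<And>n \<omega>. n \<ge> 1 \<Longrightarrow> \<omega> \<in> space M \<Longrightarrow> topical (A n \<omega>)"
    and "\<And>n. n \<ge> 1 \<Longrightarrow> A n \<in> measurable M op_space"
    and "prob_space.indep_vars M (\<lambda>_. op_space) A {1..}"
    and "\<And>n. n \<ge> 1 \<Longrightarrow> distr M op_space (A n) = distr M op_space (A 1)"
    and "topical \<theta>1" and "rank1 \<theta>1"
    and "\<And>F \<theta>'. F \<in> op_support M (A 1) \<Longrightarrow> \<theta>' \<in> gen_semigroup (op_support M (A 1))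
           \<Longrightarrow> rank1 \<theta>' \<Longrightarrow> \<forall>x. \<theta>1 (F (\<theta>' x)) - \<theta>1 (\<theta>' x) \<in> lattice_line a b"
  shows "\<forall>\<theta> \<in> gen_semigroup (op_support M (A 1)). rank1 \<theta> \<longrightarrow>
           (\<forall>F \<in> op_support M (A 1). \<forall>\<theta>' \<in> gen_semigroup (op_support M (A 1)).
              rank1 \<theta>' \<longrightarrow> (\<forall>x. \<theta> (F (\<theta>' x)) - \<theta> (\<theta>' x) \<in> lattice_line a b))"
proof -
  have "\<And>F. F \<in> op_support M (A 1) \<Longrightarrow> add_homogeneous F"
    unfolding op_support_def by (blast intro: topical_imp_add_homogeneous)
  then show ?thesis
    using rank1_increment_lattice_line[OF _ assms(8) topical_imp_add_homogeneous[OF assms(6)]]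
    by blast
qed

end
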